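(* Let $X$ be a finite set with $|X|\ge5$, $k$ an integer with $5<k<|X|-5$, $\mathfrak{C}$ a nonempty symmetric family of choice functions for $\binom{X}{k}$, $\mathcal{F}$ the set of simple averaging functions for $\mathfrak{C}$, and assume $r(\mathcal{F})=2$. Let $\bar a^*=(a^*_1,a^*_2,a^*_3,a^*_4)\in X^4$ be without repetition. Then there is $g\in\mathcal{F}_{[4]}$ such that $g(\bar b)=b_1$ for every $\bar b\in X^4$ with a repetition, and $g(\bar a^* )=a^*_2$.
   Context: $\binom{X}{k}=\{Y\subseteq X:|Y|=k\}$; choice functions satisfy $c(Y)\in Y$. Symmetric: closed under $c\mapsto\pi*c$, $(\pi*c)(Y)=\pi^{-1}(c(\pi(Y)))$. $\mathcal{F}_{[r]}$: functions $f:X^r\to X$ with $f(a,\dots,a)=a$ such that for all $c_1,\dots,c_r\in\mathfrak{C}$, $Y\mapsto f(c_1(Y),\dots,c_r(Y))$ is in $\mathfrak{C}$. A monarchy is a projection. $r(\mathcal{F})=\min\{r:\text{some } f\in\mathcal{F}_{[r]}\text{ is not a monarchy}\}$. *)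

theory Defs
  imports "HOL-Library.FuncSet" "HOL-Combinatorics.Permutations"
begin

definition ksubsets :: "'a set \<Rightarrow> nat \<Rightarrow> 'a set set" where
  "ksubsets X k = {Y. Y \<subseteq> X \<and> card Y = k}"

definition choice_fun :: "'a set \<Rightarrow> nat \<Rightarrow> ('a set \<Rightarrow> 'a) \<Rightarrow> bool" where
  "choice_fun X k c \<longleftrightarrow> c \<in> extensional (ksubsets X k) \<and> (\<forall>Y\<in>ksubsets X k. c Y \<in> Y)"

definition perm_act :: "'a set \<Rightarrow> nat \<Rightarrow> ('a \<Rightarrow> 'a) \<Rightarrow> ('a set \<Rightarrow> 'a) \<Rightarrow> ('a set \<Rightarrow> 'a)" where
  "perm_act X k \<pi> c = restrict (\<lambda>Y. inv_into X \<pi> (c (\<pi> ` Y))) (ksubsets X k)"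

definition symmetric_family :: "'a set \<Rightarrow> nat \<Rightarrow> ('a set \<Rightarrow> 'a) set \<Rightarrow> bool" where
  "symmetric_family X k C \<longleftrightarrow>
     (\<forall>\<pi> c. \<pi> permutes X \<longrightarrow> c \<in> C \<longrightarrow> perm_act X k \<pi> c \<in> C)"

definition tuples :: "'a set \<Rightarrow> nat \<Rightarrow> 'a list set" where
  "tuples X r = {xs. length xs = r \<and> set xs \<subseteq> X}"

definition avg_funs :: "'a set \<Rightarrow> nat \<Rightarrow> ('a set \<Rightarrow> 'a) set \<Rightarrow> nat \<Rightarrow> ('a list \<Rightarrow> 'a) set" where
  "avg_funs X k C r = {f.
     (\<forall>xs\<in>tuples X r. f xs \<in> X) \<and>
     (\<forall>a\<in>X. f (replicate r a) = a) \<and>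
     (\<forall>cs. length cs = r \<longrightarrow> set cs \<subseteq> C \<longrightarrow>
        restrict (\<lambda>Y. f (map (\<lambda>c. c Y) cs)) (ksubsets X k) \<in> C)}"

definition monarchy :: "'a set \<Rightarrow> nat \<Rightarrow> ('a list \<Rightarrow> 'a) \<Rightarrow> bool" where
  "monarchy X r f \<longleftrightarrow> (\<exists>i<r. \<forall>xs\<in>tuples X r. f xs = xs ! i)"

definition r_index_is :: "'a set \<Rightarrow> nat \<Rightarrow> ('a set \<Rightarrow> 'a) set \<Rightarrow> nat \<Rightarrow> bool" where
  "r_index_is X k C m \<longleftrightarrow>
     (\<exists>f\<in>avg_funs X k C m. \<not> monarchy X m f) \<and>
     (\<forall>r<m. \<forall>f\<in>avg_funs X k C r. monarchy X r f)"

end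

theory Submission
  imports Defs
begin

(* A binary averaging function f is conservative: if f(x, y) = z were a third point, a k-set
   containing x and y but not z, on which two choice functions of the family pick x and y,
   would be sent to z.  So f is the switch that returns y exactly on a set T of off-diagonal
   pairs (x, y).  Closure of averaging functions under composition and under conjugation by
   permutations makes these switch sets closed under intersection, under
   T |-> (X x X - Id) - T^-1 and under permutations of X.  Say that P forces Q if every switch
   set containing P contains Q.  If (p, q) forced a pair other than (p, q) and (q, p), then by
   symmetry some pair would force a disjoint one, and then every pair would force every
   other; a non-monarchic binary function (r(F) = 2) gives a switch set that is neither empty
   nor full, which excludes this.  Hence the least switch set containing (p, q) lies in
   {(p, q), (q, p)}, and its switch moves its first argument only at (p, q) and possibly
   (q, p).  Chaining these switches along a0 -> a2 -> a3 -> a1 yields g. *)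

lemma permutes_map_distinct:
  assumes "distinct xs" "distinct ys" "length xs = length ys" "set xs \<subseteq> X" "set ys \<subseteq> X"
  shows "\<exists>\<sigma>. \<sigma> permutes X \<and> map \<sigma> xs = ys"
  using assms
proof (induction xs arbitrary: ys)
  case Nil
  then show ?case by (auto intro: permutes_id)
next
  case (Cons x xs)
  then obtain y ys' where ys: "ys = y # ys'" by (cases ys) auto
  with Cons obtain \<sigma> where \<sigma>: "\<sigma> permutes X" "map \<sigma> xs = ys'" by auto
  have "\<sigma> x \<notin> set ys'"
  proof
    assume "\<sigma> x \<in> set ys'"
    then obtain z where "z \<in> set xs" "\<sigma> z = \<sigma> x" using \<sigma>(2) by auto
    with Cons.prems(1) show False using permutes_inj[OF \<sigma>(1)] by (auto dest: injD)
  qed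
  moreover have "y \<notin> set ys'" using Cons.prems(2) ys by auto
  ultimately have fix_ys': "map (transpose (\<sigma> x) y) ys' = ys'"
    by (auto simp: transpose_def intro!: map_idI)
  have "transpose (\<sigma> x) y \<circ> \<sigma> permutes X"
    using Cons.prems ys \<sigma>(1)
    by (intro permutes_compose permutes_swap_id) (auto simp: permutes_in_image)
  moreover have "map (transpose (\<sigma> x) y \<circ> \<sigma>) (x # xs) = ys"
    using ys \<sigma>(2) fix_ys' by (simp flip: map_map)
  ultimately show ?case by blast
qed

lemma permutes_image_ksubsets:
  assumes "\<sigma> permutes X" "Y \<in> ksubsets X k"
  shows "\<sigma> ` Y \<in> ksubsets X k"
  using assms unfolding ksubsets_def
  by (auto simp: permutes_in_image card_image permutes_inj_on intro: inj_on_subset)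

lemma perm_act_apply:
  assumes \<sigma>: "\<sigma> permutes X" and c: "choice_fun X k c" and Y: "Y \<in> ksubsets X k"
  shows "perm_act X k \<sigma> c Y = inv \<sigma> (c (\<sigma> ` Y))"
proof -
  have "c (\<sigma> ` Y) \<in> X"
    using c permutes_image_ksubsets[OF \<sigma> Y] by (auto simp: choice_fun_def ksubsets_def)
  then have "inv_into X \<sigma> (c (\<sigma> ` Y)) = inv \<sigma> (c (\<sigma> ` Y))"
    using \<sigma> by (intro inv_into_f_eq)
      (auto simp: permutes_inj_on permutes_in_image permutes_inv permutes_inverses)
  then show ?thesis using Y by (simp add: perm_act_def)
qed

lemma tuples_2_iff: "xs \<in> tuples X 2 \<longleftrightarrow> (\<exists>x y. xs = [x, y] \<and> x \<in> X \<and> y \<in> X)"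
  by (auto simp: tuples_def numeral_2_eq_2 length_Suc_conv)

lemma tuples_4_iff:
  "xs \<in> tuples X 4 \<longleftrightarrow> (\<exists>x0 x1 x2 x3. xs = [x0, x1, x2, x3] \<and> set xs \<subseteq> X)"
  by (auto simp: tuples_def numeral_eq_Suc length_Suc_conv)

lemma card_less_imp_ex_notin: "finite A \<Longrightarrow> card A < card X \<Longrightarrow> \<exists>z\<in>X. z \<notin> A"
  by (metis card_mono not_le subsetI)

locale choice_family =
  fixes X :: "'a set" and k :: nat and C :: "('a set \<Rightarrow> 'a) set"
  assumes choice_funs: "\<forall>c\<in>C. choice_fun X k c"
begin

abbreviation \<F> :: "nat \<Rightarrow> ('a list \<Rightarrow> 'a) set" where
  "\<F> r \<equiv> avg_funs X k C r"

lemma avg_funs_closed: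
  "f \<in> \<F> r \<Longrightarrow> length cs = r \<Longrightarrow> set cs \<subseteq> C \<Longrightarrow>
    restrict (\<lambda>Y. f (map (\<lambda>c. c Y) cs)) (ksubsets X k) \<in> C"
  unfolding avg_funs_def by blast

lemma map_choices_in_tuples:
  "set cs \<subseteq> C \<Longrightarrow> Y \<in> ksubsets X k \<Longrightarrow> map (\<lambda>c. c Y) cs \<in> tuples X (length cs)"
  using choice_funs unfolding tuples_def choice_fun_def ksubsets_def by auto

lemma avg_funs_cong:
  assumes f: "f \<in> \<F> r" and eq: "\<And>xs. xs \<in> tuples X r \<Longrightarrow> g xs = f xs"
  shows "g \<in> \<F> r"
proof -
  have "replicate r a \<in> tuples X r" if "a \<in> X" for a
    using that by (auto simp: tuples_def)
  moreover have "restrict (\<lambda>Y. g (map (\<lambda>c. c Y) cs)) (ksubsets X k) =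
      restrict (\<lambda>Y. f (map (\<lambda>c. c Y) cs)) (ksubsets X k)"
    if "length cs = r" "set cs \<subseteq> C" for cs
    using that by (intro restrict_ext) (metis eq map_choices_in_tuples)
  ultimately show ?thesis using f eq unfolding avg_funs_def by auto
qed

lemma nth_in_avg_funs:
  assumes "i < r"
  shows "(\<lambda>xs. xs ! i) \<in> \<F> r"
proof -
  have "restrict (\<lambda>Y. map (\<lambda>c. c Y) cs ! i) (ksubsets X k) = cs ! i"
    if "length cs = r" "set cs \<subseteq> C" for cs
  proof -
    have "cs ! i \<in> C" using that assms nth_mem by blast
    then have "cs ! i \<in> extensional (ksubsets X k)"
      using choice_funs by (auto simp: choice_fun_def)
    then show ?thesis using that assms by (auto simp: extensional_def)
  qed
  then show ?thesis using assms unfolding avg_funs_def tuples_def by (auto dest: nth_mem)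
qed

lemma avg_funs_compose:
  assumes f: "f \<in> \<F> m" and len: "length hs = m" and hs: "set hs \<subseteq> \<F> r"
  shows "(\<lambda>xs. f (map (\<lambda>h. h xs) hs)) \<in> \<F> r"
proof -
  have "map (\<lambda>h. h xs) hs \<in> tuples X m" if "xs \<in> tuples X r" for xs
    using that hs len by (auto simp: tuples_def avg_funs_def)
  moreover have "map (\<lambda>h. h (replicate r a)) hs = replicate m a" if "a \<in> X" for a
    using that hs len by (auto simp: avg_funs_def subset_iff intro!: replicate_eqI)
  moreover have "restrict (\<lambda>Y. f (map (\<lambda>h. h (map (\<lambda>c. c Y) cs)) hs)) (ksubsets X k) \<in> C"
    if cs: "length cs = r" "set cs \<subseteq> C" for cs
  proof -
    define ds where "ds = map (\<lambda>h. restrict (\<lambda>Y. h (map (\<lambda>c. c Y) cs)) (ksubsets X k)) hs"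
    have "set ds \<subseteq> C" "length ds = m"
      using hs cs len unfolding ds_def avg_funs_def by auto
    then have "restrict (\<lambda>Y. f (map (\<lambda>d. d Y) ds)) (ksubsets X k) \<in> C"
      using avg_funs_closed[OF f] by blast
    moreover have "restrict (\<lambda>Y. f (map (\<lambda>d. d Y) ds)) (ksubsets X k) =
        restrict (\<lambda>Y. f (map (\<lambda>h. h (map (\<lambda>c. c Y) cs)) hs)) (ksubsets X k)"
      by (auto simp: ds_def o_def intro!: restrict_ext)
    ultimately show ?thesis by simp
  qed
  ultimately show ?thesis using f unfolding avg_funs_def by auto
qed

lemma avg_funs_compose2:
  assumes "h \<in> \<F> 2" "f \<in> \<F> r" "g \<in> \<F> r"
  shows "(\<lambda>xs. h [f xs, g xs]) \<in> \<F> r"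
  using avg_funs_compose[of h 2 "[f, g]"] assms by simp

end

locale symmetric_choice_family = choice_family +
  assumes nonempty: "C \<noteq> {}" and symmetric: "symmetric_family X k C"
begin

lemma perm_act_in:
  "\<sigma> permutes X \<Longrightarrow> c \<in> C \<Longrightarrow> perm_act X k \<sigma> c \<in> C"
  using symmetric unfolding symmetric_family_def by blast

lemma avg_funs_conjugate_closed:
  assumes f: "f \<in> \<F> r" and \<sigma>: "\<sigma> permutes X" and cs: "length cs = r" "set cs \<subseteq> C"
  shows "restrict (\<lambda>Y. \<sigma> (f (map (inv \<sigma>) (map (\<lambda>c. c Y) cs)))) (ksubsets X k) \<in> C"
proof -
  (* the function is the translate by inv \<sigma> of the average h of the translates by \<sigma> *)
  have \<sigma>': "inv \<sigma> permutes X" using \<sigma> by (rule permutes_inv)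
  define h where "h = restrict (\<lambda>Y. f (map (\<lambda>c. perm_act X k \<sigma> c Y) cs)) (ksubsets X k)"
  have "set (map (perm_act X k \<sigma>) cs) \<subseteq> C" using cs perm_act_in[OF \<sigma>] by auto
  then have "h \<in> C"
    using avg_funs_closed[OF f, of "map (perm_act X k \<sigma>) cs"] cs by (simp add: h_def o_def)
  then have "perm_act X k (inv \<sigma>) h \<in> C" by (rule perm_act_in[OF \<sigma>'])
  moreover have "perm_act X k (inv \<sigma>) h Y = \<sigma> (f (map (inv \<sigma>) (map (\<lambda>c. c Y) cs)))"
    if Y: "Y \<in> ksubsets X k" for Y
  proof -
    have Y': "inv \<sigma> ` Y \<in> ksubsets X k" by (rule permutes_image_ksubsets[OF \<sigma>' Y])
    have "\<sigma> ` inv \<sigma> ` Y = Y"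
      using \<sigma> by (simp add: image_comp permutes_inv_o)
    then have act: "perm_act X k \<sigma> c (inv \<sigma> ` Y) = inv \<sigma> (c Y)" if "c \<in> C" for c
      using perm_act_apply[OF \<sigma> _ Y'] that choice_funs by simp
    have "perm_act X k (inv \<sigma>) h Y = \<sigma> (h (inv \<sigma> ` Y))"
      using perm_act_apply[OF \<sigma>' _ Y] \<open>h \<in> C\<close> choice_funs \<sigma> by (simp add: permutes_inv_inv)
    also have "h (inv \<sigma> ` Y) = f (map (\<lambda>c. perm_act X k \<sigma> c (inv \<sigma> ` Y)) cs)"
      using Y' by (simp add: h_def)
    also have "map (\<lambda>c. perm_act X k \<sigma> c (inv \<sigma> ` Y)) cs = map (inv \<sigma>) (map (\<lambda>c. c Y) cs)"
      using cs act by auto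
    finally show ?thesis .
  qed
  then have "perm_act X k (inv \<sigma>) h =
      restrict (\<lambda>Y. \<sigma> (f (map (inv \<sigma>) (map (\<lambda>c. c Y) cs)))) (ksubsets X k)"
    unfolding perm_act_def[of X k "inv \<sigma>" h] by (intro restrict_ext) (simp add: perm_act_def)
  ultimately show ?thesis by simp
qed

lemma avg_funs_conjugate:
  assumes f: "f \<in> \<F> r" and \<sigma>: "\<sigma> permutes X"
  shows "(\<lambda>xs. \<sigma> (f (map (inv \<sigma>) xs))) \<in> \<F> r"
proof -
  have \<sigma>': "inv \<sigma> permutes X" using \<sigma> by (rule permutes_inv)
  have "map (inv \<sigma>) xs \<in> tuples X r" if "xs \<in> tuples X r" for xs
    using that \<sigma>' by (auto simp: tuples_def permutes_in_image)
  then have "\<sigma> (f (map (inv \<sigma>) xs)) \<in> X" if "xs \<in> tuples X r" for xs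
    using that f \<sigma> by (auto simp: avg_funs_def permutes_in_image)
  moreover have "\<sigma> (f (map (inv \<sigma>) (replicate r a))) = a" if "a \<in> X" for a
    using that f \<sigma> \<sigma>' by (auto simp: avg_funs_def permutes_in_image permutes_inverses)
  ultimately show ?thesis
    using avg_funs_conjugate_closed[OF f \<sigma>] unfolding avg_funs_def by auto
qed

lemma choice_family_realises:
  assumes Y: "Y \<in> ksubsets X k" and x: "x \<in> Y"
  shows "\<exists>c\<in>C. c Y = x"
proof -
  obtain c where c: "c \<in> C" using nonempty by auto
  have "c Y \<in> Y" "Y \<subseteq> X" using choice_funs c Y by (auto simp: choice_fun_def ksubsets_def)
  define \<pi> where "\<pi> = transpose x (c Y)"
  have \<pi>: "\<pi> permutes X" unfolding \<pi>_def using \<open>c Y \<in> Y\<close> \<open>Y \<subseteq> X\<close> x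
    by (intro permutes_swap_id) auto
  have "\<pi> ` Y = Y" unfolding \<pi>_def using x \<open>c Y \<in> Y\<close> by (auto simp: transpose_def image_iff)
  then have "perm_act X k \<pi> c Y = x"
    using perm_act_apply[OF \<pi> _ Y] choice_funs c \<pi> by (simp add: \<pi>_def permutes_inv_eq)
  moreover have "perm_act X k \<pi> c \<in> C" using perm_act_in[OF \<pi> c] .
  ultimately show ?thesis by blast
qed

lemma binary_avg_fun_conservative:
  assumes "finite X" "2 \<le> k" "k < card X"
    and f: "f \<in> \<F> 2" and x: "x \<in> X" and y: "y \<in> X"
  shows "f [x, y] \<in> {x, y}"
proof (rule ccontr)
  assume z_fresh: "f [x, y] \<notin> {x, y}"
  define z where "z = f [x, y]"
  have "z \<in> X" using f x y by (auto simp: avg_funs_def tuples_def z_def)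
  have "x \<noteq> y" using z_fresh f x by (auto simp: avg_funs_def numeral_2_eq_2)
  have "card {x, y, z} \<le> 3" by (simp add: card_insert_if)
  then have "k - 2 \<le> card (X - {x, y, z})"
    using assms(1,3) x y \<open>z \<in> X\<close> by (simp add: card_Diff_subset)
  then obtain B where B: "B \<subseteq> X - {x, y, z}" "card B = k - 2" "finite B"
    by (meson obtain_subset_with_card_n)
  define Y where "Y = insert x (insert y B)"
  have Y: "Y \<in> ksubsets X k"
    using B x y \<open>x \<noteq> y\<close> assms(2) unfolding Y_def ksubsets_def by (auto simp: card_insert_if)
  obtain c1 c2 where c: "c1 \<in> C" "c1 Y = x" "c2 \<in> C" "c2 Y = y"
    using choice_family_realises[OF Y] Y_def by blast
  then have "restrict (\<lambda>Y. f (map (\<lambda>c. c Y) [c1, c2])) (ksubsets X k) \<in> C"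
    using avg_funs_closed[OF f, of "[c1, c2]"] by simp
  then have "z \<in> Y" using choice_funs Y c by (auto simp: choice_fun_def z_def)
  then show False using B z_fresh unfolding Y_def z_def by auto
qed

end

definition switch :: "('a \<times> 'a) set \<Rightarrow> 'a list \<Rightarrow> 'a" where
  "switch T xs = (if (xs ! 0, xs ! 1) \<in> T then xs ! 1 else xs ! 0)"

lemma switch_Cons_Cons [simp]: "switch T [x, y] = (if (x, y) \<in> T then y else x)"
  by (simp add: switch_def)

lemma switch_off_diagonal: "xs \<in> tuples X 2 \<Longrightarrow> switch (X \<times> X - Id) xs = xs ! 1"
  by (auto simp: tuples_2_iff)

definition pair_switch :: "bool \<Rightarrow> 'a \<Rightarrow> 'a \<Rightarrow> 'a \<Rightarrow> 'a \<Rightarrow> 'a" where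
  "pair_switch both p q x y =
    (if (x, y) = (p, q) then q else if (x, y) = (q, p) \<and> both then p else x)"

lemma switch_two_pairs:
  "(p, q) \<in> T \<Longrightarrow> T \<subseteq> {(p, q), (q, p)} \<Longrightarrow> switch T [x, y] = pair_switch ((q, p) \<in> T) p q x y"
  by (auto simp: pair_switch_def)

lemma pair_switch_chain_repetition:
  assumes "distinct [a0, a1, a2, a3]" "\<not> distinct [b0, b1, b2, b3]"
  shows "pair_switch R01 a0 a1 b0
    (pair_switch R31 a3 a1 (pair_switch R23 a2 a3 (pair_switch R02 a0 a2 b0 b2) b3) b1) = b0"
proof -
  consider "b0 \<notin> {a0, a1}" | "b0 = a1" | "b0 = a0" "b2 \<noteq> a2" | "b0 = a0" "b2 = a2" "b3 \<noteq> a3"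
    | "b0 = a0" "b2 = a2" "b3 = a3" "b1 \<noteq> a1" | "[b0, b1, b2, b3] = [a0, a1, a2, a3]"
    by auto
  then show ?thesis using assms by cases (auto simp: pair_switch_def)
qed
lemma pair_switch_chain_distinct:
  assumes "distinct [a0, a1, a2, a3]"
  shows "pair_switch R01 a0 a1 a0
    (pair_switch R31 a3 a1 (pair_switch R23 a2 a3 (pair_switch R02 a0 a2 a0 a2) a3) a1) = a1"
  using assms unfolding pair_switch_def by simp

locale large_symmetric_choice_family = symmetric_choice_family +
  assumes finite_X: "finite X" and k_ge_2: "2 \<le> k" and k_less_card: "k < card X"
    and card_ge_6: "6 \<le> card X"
begin

definition switch_sets :: "('a \<times> 'a) set set" where
  "switch_sets = {T. T \<subseteq> X \<times> X - Id \<and> switch T \<in> \<F> 2}"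

definition forces :: "'a \<times> 'a \<Rightarrow> 'a \<times> 'a \<Rightarrow> bool" where
  "forces P Q \<longleftrightarrow> (\<forall>T\<in>switch_sets. P \<in> T \<longrightarrow> Q \<in> T)"

definition least_switch_set :: "'a \<times> 'a \<Rightarrow> ('a \<times> 'a) set" where
  "least_switch_set P = (X \<times> X - Id) \<inter> \<Inter>{T \<in> switch_sets. P \<in> T}"

lemma switch_of_avg_fun:
  assumes f: "f \<in> \<F> 2" and xs: "xs \<in> tuples X 2"
  shows "switch {(x, y) \<in> X \<times> X - Id. f [x, y] = y} xs = f xs"
proof -
  obtain x y where xy: "xs = [x, y]" "x \<in> X" "y \<in> X" using xs by (auto simp: tuples_2_iff)
  show ?thesis
  proof (cases "x = y")
    case True
    then show ?thesis using f xy by (simp add: avg_funs_def numeral_2_eq_2)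
  next
    case False
    then show ?thesis
      using binary_avg_fun_conservative[OF finite_X k_ge_2 k_less_card f xy(2,3)] xy by auto
  qed
qed

lemma switch_set_of_avg_fun:
  "f \<in> \<F> 2 \<Longrightarrow> {(x, y) \<in> X \<times> X - Id. f [x, y] = y} \<in> switch_sets"
  unfolding switch_sets_def using avg_funs_cong switch_of_avg_fun by blast

lemma off_diagonal_in_switch_sets: "X \<times> X - Id \<in> switch_sets"
  unfolding switch_sets_def
  using avg_funs_cong[OF nth_in_avg_funs[of 1 2]] switch_off_diagonal by auto

lemma switch_sets_Int:
  assumes T: "T \<in> switch_sets" and T': "T' \<in> switch_sets"
  shows "T \<inter> T' \<in> switch_sets"
proof -
  have "(\<lambda>xs. switch T [xs ! 0, switch T' xs]) \<in> \<F> 2"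
    using T T' by (intro avg_funs_compose2 nth_in_avg_funs) (auto simp: switch_sets_def)
  moreover have "switch (T \<inter> T') xs = switch T [xs ! 0, switch T' xs]" if "xs \<in> tuples X 2" for xs
    using that T by (auto simp: tuples_2_iff switch_sets_def)
  ultimately show ?thesis using T by (auto simp: switch_sets_def intro: avg_funs_cong)
qed

lemma switch_sets_reverse:
  assumes T: "T \<in> switch_sets"
  shows "X \<times> X - Id - T\<inverse> \<in> switch_sets"
proof -
  have "(\<lambda>xs. switch T [xs ! 1, xs ! 0]) \<in> \<F> 2"
    using T by (intro avg_funs_compose2 nth_in_avg_funs) (auto simp: switch_sets_def)
  moreover have "switch (X \<times> X - Id - T\<inverse>) xs = switch T [xs ! 1, xs ! 0]"
    if "xs \<in> tuples X 2" for xs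
    using that by (auto simp: tuples_2_iff)
  ultimately show ?thesis by (auto simp: switch_sets_def intro: avg_funs_cong)
qed

lemma switch_sets_permute:
  assumes T: "T \<in> switch_sets" and \<sigma>: "\<sigma> permutes X"
  shows "map_prod \<sigma> \<sigma> ` T \<in> switch_sets"
proof -
  have "T \<subseteq> X \<times> X - Id" "switch T \<in> \<F> 2" using T by (auto simp: switch_sets_def)
  then have "map_prod \<sigma> \<sigma> ` T \<subseteq> X \<times> X - Id"
    using \<sigma> by (auto simp: permutes_in_image dest: permutes_inj[THEN injD])
  moreover have "(x, y) \<in> map_prod \<sigma> \<sigma> ` T \<longleftrightarrow> (inv \<sigma> x, inv \<sigma> y) \<in> T" for x y
    using \<sigma> by (auto simp: permutes_inverses image_iff intro!: bexI[of _ "(inv \<sigma> x, inv \<sigma> y)"])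
  then have "switch (map_prod \<sigma> \<sigma> ` T) xs = \<sigma> (switch T (map (inv \<sigma>) xs))"
    if "xs \<in> tuples X 2" for xs
    using that \<sigma> by (auto simp: tuples_2_iff permutes_inverses)
  ultimately show ?thesis
    using avg_funs_conjugate[OF \<open>switch T \<in> \<F> 2\<close> \<sigma>]
    by (auto simp: switch_sets_def intro: avg_funs_cong)
qed

lemma switch_sets_Inter:
  "finite \<T> \<Longrightarrow> \<T> \<subseteq> switch_sets \<Longrightarrow> (X \<times> X - Id) \<inter> \<Inter>\<T> \<in> switch_sets"
proof (induction rule: finite_induct)
  case empty
  then show ?case using off_diagonal_in_switch_sets by simp
next
  case (insert T \<T>)
  then have "T \<inter> ((X \<times> X - Id) \<inter> \<Inter>\<T>) \<in> switch_sets" by (auto intro: switch_sets_Int)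
  then show ?case by (simp add: Int_left_commute)
qed

lemma least_switch_set_in: "least_switch_set P \<in> switch_sets"
proof -
  have "{T \<in> switch_sets. P \<in> T} \<subseteq> Pow (X \<times> X)" by (auto simp: switch_sets_def)
  then have "finite {T \<in> switch_sets. P \<in> T}"
    using finite_X by (meson finite_Pow_iff finite_SigmaI finite_subset)
  then show ?thesis unfolding least_switch_set_def by (intro switch_sets_Inter) auto
qed

lemma in_least_switch_set: "P \<in> X \<times> X - Id \<Longrightarrow> P \<in> least_switch_set P"
  by (auto simp: least_switch_set_def)

lemma forces_if_in_least_switch_set: "Q \<in> least_switch_set P \<Longrightarrow> forces P Q"
  by (auto simp: least_switch_set_def forces_def)

lemma forces_trans: "forces P Q \<Longrightarrow> forces Q R \<Longrightarrow> forces P R"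
  by (auto simp: forces_def)

lemma forces_permute:
  assumes \<sigma>: "\<sigma> permutes X" and PQ: "forces P Q"
  shows "forces (map_prod \<sigma> \<sigma> P) (map_prod \<sigma> \<sigma> Q)"
  unfolding forces_def
proof (intro ballI impI)
  fix T assume T: "T \<in> switch_sets" "map_prod \<sigma> \<sigma> P \<in> T"
  have \<sigma>': "inv \<sigma> permutes X" using \<sigma> by (rule permutes_inv)
  have inv_image: "R \<in> map_prod (inv \<sigma>) (inv \<sigma>) ` T \<longleftrightarrow> map_prod \<sigma> \<sigma> R \<in> T" for R
    using \<sigma> by (cases R) (force simp: permutes_inverses image_iff)
  have "P \<in> map_prod (inv \<sigma>) (inv \<sigma>) ` T" using T(2) inv_image by blast
  then have "Q \<in> map_prod (inv \<sigma>) (inv \<sigma>) ` T"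
    using PQ switch_sets_permute[OF T(1) \<sigma>'] by (auto simp: forces_def)
  then show "map_prod \<sigma> \<sigma> Q \<in> T" using inv_image by blast
qed

lemma forces_reverse:
  assumes PQ: "forces P Q" and P: "P \<in> X \<times> X - Id"
  shows "forces (prod.swap Q) (prod.swap P)"
  unfolding forces_def
proof (intro ballI impI)
  fix T assume T: "T \<in> switch_sets" "prod.swap Q \<in> T"
  have "Q \<notin> X \<times> X - Id - T\<inverse>" using T(2) by (cases Q) auto
  then have "P \<notin> X \<times> X - Id - T\<inverse>"
    using PQ switch_sets_reverse[OF T(1)] by (auto simp: forces_def)
  then show "prod.swap P \<in> T" using P by (cases P) auto
qed

lemma forces_transfer:
  assumes "distinct xs" "distinct ys" "length xs = length ys" "set xs \<subseteq> X" "set ys \<subseteq> X"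
    and "i < length xs" "j < length xs" "l < length xs" "m < length xs"
    and "forces (xs ! i, xs ! j) (xs ! l, xs ! m)"
  shows "forces (ys ! i, ys ! j) (ys ! l, ys ! m)"
proof -
  obtain \<sigma> where \<sigma>: "\<sigma> permutes X" "map \<sigma> xs = ys"
    using permutes_map_distinct assms(1-5) by blast
  show ?thesis
    using forces_permute[OF \<sigma>(1) assms(10)] \<sigma>(2) assms(6-9) by auto
qed

lemma forces_all_if_forces_disjoint:
  assumes xyuv: "distinct [x, y, u, v]" "set [x, y, u, v] \<subseteq> X" "forces (x, y) (u, v)"
    and P: "P \<in> X \<times> X - Id" and Q: "Q \<in> X \<times> X - Id"
  shows "forces P Q"
proof -
  obtain p p' q q' where PQ: "P = (p, p')" "Q = (q, q')" by fastforce
  have "card {p, p', q, q'} < card X" using card_ge_6 by (simp add: card_insert_if)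
  then obtain r where r: "r \<in> X" "r \<notin> {p, p', q, q'}"
    using card_less_imp_ex_notin[of "{p, p', q, q'}"] by auto
  have "card {r, p, p', q, q'} < card X" using card_ge_6 by (simp add: card_insert_if)
  then obtain s where s: "s \<in> X" "s \<notin> {r, p, p', q, q'}"
    using card_less_imp_ex_notin[of "{r, p, p', q, q'}"] by auto
  have "forces (p, p') (r, s)"
    using forces_transfer[of "[x, y, u, v]" "[p, p', r, s]" 0 1 2 3] xyuv P PQ r s by auto
  moreover have "forces (r, s) (q, q')"
    using forces_transfer[of "[x, y, u, v]" "[r, s, q, q']" 0 1 2 3] xyuv Q PQ r s by auto
  ultimately show ?thesis using PQ forces_trans by blast
qed

lemma forces_disjoint_if_forces_other:
  assumes pq: "p \<in> X" "q \<in> X" "p \<noteq> q" and uv: "(u, v) \<in> X \<times> X - Id"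
    and forces_uv: "forces (p, q) (u, v)" and other: "(u, v) \<notin> {(p, q), (q, p)}"
  shows "\<exists>x y z w. distinct [x, y, z, w] \<and> set [x, y, z, w] \<subseteq> X \<and> forces (x, y) (z, w)"
proof -
  have u: "u \<in> X" and v: "v \<in> X" and "u \<noteq> v" using uv by auto
  have "card {p, q, u, v} < card X" using card_ge_6 by (simp add: card_insert_if)
  then obtain z where z: "z \<in> X" "z \<notin> {p, q, u, v}"
    using card_less_imp_ex_notin[of "{p, q, u, v}"] by auto
  have witness: "?thesis"
    if "distinct [p, q, x, y]" "set [p, q, x, y] \<subseteq> X" "forces (p, q) (x, y)" for x y
    using that by blast
  note facts = forces_uv other pq u v z \<open>u \<noteq> v\<close>
  (* if (u, v) shares a point with (p, q), transporting the forcing by permutations through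
     the fresh point z and composing gives a pair forced by (p, q) and disjoint from it *)
  consider "u = p" | "v = p" | "u = q" | "v = q" | "u \<notin> {p, q}" "v \<notin> {p, q}" by blast
  then show ?thesis
  proof cases
    case 1
    then have "forces (v, z) (v, p)"
      using forces_transfer[of "[p, q, v]" "[v, z, p]" 0 1 0 2] facts by auto
    then have "forces (p, v) (z, v)" using forces_reverse[of "(v, z)" "(v, p)"] v z by auto
    then have "forces (p, q) (z, v)" using forces_trans forces_uv 1 by blast
    then show ?thesis using witness[of z v] 1 facts by auto
  next
    case 2
    then have "forces (u, p) (z, u)"
      using forces_transfer[of "[p, q, u]" "[u, p, z]" 0 1 2 0] facts by auto
    then have "forces (p, q) (z, u)" using forces_trans forces_uv 2 by blast
    then show ?thesis using witness[of z u] 2 facts by auto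
  next
    case 3
    then have "forces (q, v) (v, z)"
      using forces_transfer[of "[p, q, v]" "[q, v, z]" 0 1 1 2] facts by auto
    then have "forces (p, q) (v, z)" using forces_trans forces_uv 3 by blast
    then show ?thesis using witness[of v z] 3 facts by auto
  next
    case 4
    then have "forces (u, p) (q, p)"
      using forces_transfer[of "[p, q, u]" "[u, p, q]" 0 1 2 1] facts by auto
    then have "forces (p, q) (p, u)" using forces_reverse[of "(u, p)" "(q, p)"] 4 facts by auto
    moreover have "forces (p, u) (z, u)"
      using forces_transfer[of "[p, q, u]" "[p, u, z]" 0 1 2 1] facts 4 by auto
    ultimately have "forces (p, q) (z, u)" using forces_trans by blast
    then show ?thesis using witness[of z u] 4 facts by auto
  next
    case 5
    then show ?thesis using witness[of u v] facts by auto
  qed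
qed

lemma least_switch_set_subset:
  assumes nontrivial: "\<not> (\<forall>P\<in>X \<times> X - Id. \<forall>Q\<in>X \<times> X - Id. forces P Q)"
    and pq: "p \<in> X" "q \<in> X" "p \<noteq> q"
  shows "least_switch_set (p, q) \<subseteq> {(p, q), (q, p)}"
proof
  fix R assume R: "R \<in> least_switch_set (p, q)"
  show "R \<in> {(p, q), (q, p)}"
  proof (rule ccontr)
    assume other: "R \<notin> {(p, q), (q, p)}"
    obtain u v where uv: "R = (u, v)" by fastforce
    have "R \<in> X \<times> X - Id" using R by (auto simp: least_switch_set_def)
    moreover have "forces (p, q) R" using R by (rule forces_if_in_least_switch_set)
    ultimately obtain x y z w
      where "distinct [x, y, z, w]" "set [x, y, z, w] \<subseteq> X" "forces (x, y) (z, w)"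
      using forces_disjoint_if_forces_other[OF pq] other uv by blast
    then show False using forces_all_if_forces_disjoint nontrivial by blast
  qed
qed

lemma switch_sets_trivial:
  assumes trivial: "\<forall>P\<in>X \<times> X - Id. \<forall>Q\<in>X \<times> X - Id. forces P Q" and T: "T \<in> switch_sets"
  shows "T = {} \<or> T = X \<times> X - Id"
proof -
  have sub: "T \<subseteq> X \<times> X - Id" using T by (simp add: switch_sets_def)
  have "X \<times> X - Id \<subseteq> T" if P: "P \<in> T" for P
  proof
    fix Q assume "Q \<in> X \<times> X - Id"
    then have "forces P Q" using trivial P sub by blast
    then show "Q \<in> T" using T P by (simp add: forces_def)
  qed
  then show ?thesis using sub by blast
qed

lemma binary_avg_fun_monarchy:
  assumes trivial: "\<forall>P\<in>X \<times> X - Id. \<forall>Q\<in>X \<times> X - Id. forces P Q" and f: "f \<in> \<F> 2"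
  shows "monarchy X 2 f"
proof -
  define T where "T = {(x, y) \<in> X \<times> X - Id. f [x, y] = y}"
  have f_eq: "f xs = switch T xs" if "xs \<in> tuples X 2" for xs
    using switch_of_avg_fun[OF f that] by (simp add: T_def)
  consider "T = {}" | "T = X \<times> X - Id"
    using switch_sets_trivial[OF trivial switch_set_of_avg_fun[OF f]] unfolding T_def by blast
  then show ?thesis
  proof cases
    case 1
    then have "\<forall>xs\<in>tuples X 2. f xs = xs ! 0" using f_eq by (simp add: switch_def)
    then show ?thesis unfolding monarchy_def by (intro exI[of _ 0]) simp
  next
    case 2
    then have "\<forall>xs\<in>tuples X 2. f xs = xs ! 1" using f_eq switch_off_diagonal by auto
    then show ?thesis unfolding monarchy_def by (intro exI[of _ 1]) simp
  qed
qed

lemma exists_avg_fun_4_switching_at: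
  assumes nontrivial: "\<not> (\<forall>P\<in>X \<times> X - Id. \<forall>Q\<in>X \<times> X - Id. forces P Q)"
    and a: "a \<in> tuples X 4" "distinct a"
  shows "\<exists>g\<in>\<F> 4. (\<forall>b\<in>tuples X 4. \<not> distinct b \<longrightarrow> g b = b ! 0) \<and> g a = a ! 1"
proof -
  obtain a0 a1 a2 a3 where a_eq: "a = [a0, a1, a2, a3]" and aX: "set a \<subseteq> X"
    using a(1) by (auto simp: tuples_4_iff)
  have distinct_a: "distinct [a0, a1, a2, a3]" using a(2) a_eq by simp
  then have neq: "a0 \<noteq> a2" "a2 \<noteq> a3" "a3 \<noteq> a1" "a0 \<noteq> a1" by auto
  define S where "S p q = switch (least_switch_set (p, q))" for p q
  have S_in: "S p q \<in> \<F> 2" for p q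
    using least_switch_set_in by (simp add: S_def switch_sets_def)
  have S_eq: "S p q [x, y] = pair_switch ((q, p) \<in> least_switch_set (p, q)) p q x y"
    if "p \<in> X" "q \<in> X" "p \<noteq> q" for p q x y
    unfolding S_def using that
    by (intro switch_two_pairs in_least_switch_set least_switch_set_subset[OF nontrivial]) auto
  define g where "g b = S a0 a1 [b ! 0, S a3 a1 [S a2 a3 [S a0 a2 [b ! 0, b ! 2], b ! 3], b ! 1]]"
    for b
  have "g \<in> \<F> 4" unfolding g_def by (intro avg_funs_compose2 S_in nth_in_avg_funs) auto
  moreover have "g b = b ! 0" if b: "b \<in> tuples X 4" "\<not> distinct b" for b
  proof -
    obtain b0 b1 b2 b3 where b_eq: "b = [b0, b1, b2, b3]" using b(1) by (auto simp: tuples_4_iff)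
    then have "\<not> distinct [b0, b1, b2, b3]" using b(2) by simp
    then show ?thesis using aX a_eq b_eq
      by (simp add: g_def S_eq neq pair_switch_chain_repetition[OF distinct_a])
  qed
  moreover have "g a = a ! 1"
    using aX a_eq by (simp add: g_def S_eq neq pair_switch_chain_distinct[OF distinct_a])
  ultimately show ?thesis by blast
qed

end

theorem claim13p7:
  fixes X :: "'a set" and k :: nat and C :: "('a set \<Rightarrow> 'a) set" and a :: "'a list"
  assumes "finite X" and "card X \<ge> 5"
    and "5 < k" and "k < card X - 5"
    and "C \<noteq> {}" and "\<forall>c\<in>C. choice_fun X k c"
    and "symmetric_family X k C"
    and "r_index_is X k C 2"
    and "a \<in> tuples X 4" and "distinct a"
  shows "\<exists>g\<in>avg_funs X k C 4.
           (\<forall>b\<in>tuples X 4. \<not> distinct b \<longrightarrow> g b = b ! 0) \<and> g a = a ! 1"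
proof -
  interpret large_symmetric_choice_family X k C
    using assms(1-7) by unfold_locales auto
  obtain f where "f \<in> avg_funs X k C 2" "\<not> monarchy X 2 f"
    using assms(8) unfolding r_index_is_def by blast
  then have "\<not> (\<forall>P\<in>X \<times> X - Id. \<forall>Q\<in>X \<times> X - Id. forces P Q)"
    using binary_avg_fun_monarchy by blast
  then show ?thesis using exists_avg_fun_4_switching_at assms(9,10) by blast
qed

end
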